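(* Let $G$ be a finite simple $3$-connected graph of order $n$ in which every edge lies in a triangle. Then $e(G)\ge 2n-2$, and equality holds if and only if $G$ is isomorphic to the wheel $W_n$.
   Context: All graphs are finite and simple; $e(G)$ denotes the number of edges. The wheel $W_n=K_1\vee C_{n-1}$ is the join of a single vertex with a cycle on $n-1$ vertices, i.e. a cycle $C_{n-1}$ together with a new vertex adjacent to all its vertices. A $3$-connected graph has at least $4$ vertices. *)

theory Defs
  imports Main
begin

definition simple_graph :: "'a set \<Rightarrow> 'a set set \<Rightarrow> bool" where
  "simple_graph V E \<longleftrightarrow> finite V \<and>
     (\<forall>e\<in>E. \<exists>u v. e = {u, v} \<and> u \<noteq> v \<and> u \<in> V \<and> v \<in> V)"

definition connected_graph :: "'a set \<Rightarrow> 'a set set \<Rightarrow> bool" where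
  "connected_graph V E \<longleftrightarrow> V \<noteq> {} \<and>
     (\<forall>u\<in>V. \<forall>v\<in>V. (u, v) \<in> {(x, y). {x, y} \<in> E}\<^sup>*)"

definition del_edges :: "'a set \<Rightarrow> 'a set set \<Rightarrow> 'a set set" where
  "del_edges X E = {e \<in> E. e \<inter> X = {}}"

definition k_connected :: "nat \<Rightarrow> 'a set \<Rightarrow> 'a set set \<Rightarrow> bool" where
  "k_connected k V E \<longleftrightarrow> k < card V \<and>
     (\<forall>X. X \<subseteq> V \<and> card X < k \<longrightarrow> connected_graph (V - X) (del_edges X E))"

definition every_edge_in_triangle :: "'a set set \<Rightarrow> bool" where
  "every_edge_in_triangle E \<longleftrightarrow>
     (\<forall>e\<in>E. \<exists>u v w. e = {u, v} \<and> {v, w} \<in> E \<and> {u, w} \<in> E)"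

text \<open>Wheel W_n on vertices 0..n-1: hub 0, cycle 1,2,...,n-1,1.\<close>
definition wheel_vertices :: "nat \<Rightarrow> nat set" where
  "wheel_vertices n = {0..<n}"

definition wheel_edges :: "nat \<Rightarrow> nat set set" where
  "wheel_edges n = {{0, i} | i. 1 \<le> i \<and> i < n}
                 \<union> {{i, i + 1} | i. 1 \<le> i \<and> i + 1 < n}
                 \<union> {{1, n - 1}}"

definition graph_iso :: "'a set \<Rightarrow> 'a set set \<Rightarrow> 'b set \<Rightarrow> 'b set set \<Rightarrow> bool" where
  "graph_iso V E V' E' \<longleftrightarrow> (\<exists>f. bij_betw f V V' \<and>
     (\<forall>u\<in>V. \<forall>v\<in>V. {u, v} \<in> E \<longleftrightarrow> {f u, f v} \<in> E'))"

end

theory Submission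
  imports Defs "HOL-Combinatorics.Transposition"
begin

text \<open>By 3-connectivity every vertex has degree at least 3. If all degrees are at least 4, counting
  edge ends gives e(G) \<ge> 2n. Otherwise let v have degree 3: the triangles on the edges at v force
  its neighbourhood to contain a path a b c, and G' = G - v + ac is again simple, 3-connected (for
  n \<ge> 5) and has every edge in a triangle, with e(G) = e(G') + 2 + [ac \<in> E(G)]. Induction gives
  the bound; equality forces ac \<notin> E(G) and G' \<cong> W_{n-1}. In a wheel with rim length at least 4
  every triangle contains the hub, and the triangle condition in G at the rim edges rules out a or c
  as the hub. So b is the hub, a and c are consecutive on the rim, and G is the wheel obtained by
  inserting v between them. The base case n = 4 is K_4 = W_4.\<close>

definition neighbours :: "'a set set \<Rightarrow> 'a \<Rightarrow> 'a set" where
  "neighbours E x = {y. {x, y} \<in> E}"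

lemma simple_graph_edgeE:
  assumes "simple_graph V E" "e \<in> E"
  obtains x y where "e = {x, y}" "x \<noteq> y" "x \<in> V" "y \<in> V"
  using assms unfolding simple_graph_def by blast

lemma simple_graph_edgeD:
  assumes "simple_graph V E" "{x, y} \<in> E"
  shows "x \<noteq> y" "x \<in> V" "y \<in> V"
  using simple_graph_edgeE[OF assms] by (metis doubleton_eq_iff)+

lemma simple_graph_finite: "simple_graph V E \<Longrightarrow> finite V"
  unfolding simple_graph_def by simp

lemma simple_graph_edges_subset_Pow: "simple_graph V E \<Longrightarrow> E \<subseteq> Pow V"
  by (auto elim: simple_graph_edgeE)

lemma simple_graph_finite_edges: "simple_graph V E \<Longrightarrow> finite E"
  by (meson finite_Pow_iff finite_subset simple_graph_edges_subset_Pow simple_graph_finite)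

lemma neighbours_subset: "simple_graph V E \<Longrightarrow> neighbours E x \<subseteq> V"
  unfolding neighbours_def using simple_graph_edgeD by fast

lemma finite_neighbours: "simple_graph V E \<Longrightarrow> finite (neighbours E x)"
  using finite_subset[OF neighbours_subset simple_graph_finite] .

lemma self_notin_neighbours: "simple_graph V E \<Longrightarrow> x \<notin> neighbours E x"
  unfolding neighbours_def using simple_graph_edgeD(1) by fast

lemma every_edge_in_triangleE:
  assumes "every_edge_in_triangle E" "{x, y} \<in> E"
  obtains w where "{x, w} \<in> E" "{y, w} \<in> E"
  using assms unfolding every_edge_in_triangle_def by (metis doubleton_eq_iff)

lemma sum_card_neighbours:
  assumes "simple_graph V E"
  shows "(\<Sum>x\<in>V. card (neighbours E x)) = 2 * card E"
proof -
  let ?orientations = "\<lambda>e. {(x, y). {x, y} = e}"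
  have two: "card (?orientations e) = 2" if e: "e \<in> E" for e
  proof -
    obtain p q where "e = {p, q}" "p \<noteq> q"
      using simple_graph_edgeE[OF assms e] by metis
    then have "?orientations e = {(p, q), (q, p)}" "p \<noteq> q"
      by (auto simp: doubleton_eq_iff)
    then show ?thesis by simp
  qed
  then have finite: "finite (?orientations e)" if "e \<in> E" for e
    using that card.infinite by fastforce
  have "(\<Sum>x\<in>V. card (neighbours E x)) = card (Sigma V (neighbours E))"
    using simple_graph_finite[OF assms] finite_neighbours[OF assms] by (simp add: card_SigmaI)
  also have "Sigma V (neighbours E) = (\<Union>e\<in>E. ?orientations e)"
    unfolding neighbours_def using simple_graph_edgeD[OF assms] by blast
  also have "card \<dots> = (\<Sum>e\<in>E. card (?orientations e))"
    using finite simple_graph_finite_edges[OF assms] by (subst card_UN_disjoint) auto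
  also have "\<dots> = 2 * card E"
    using two by simp
  finally show ?thesis .
qed

lemma k_connected_min_degree:
  assumes "simple_graph V E" "k_connected k V E" "x \<in> V"
  shows "k \<le> card (neighbours E x)"
proof (rule ccontr)
  let ?N = "neighbours E x"
  assume "\<not> k \<le> card ?N"
  then have "card ?N < k" by simp
  then have connected: "connected_graph (V - ?N) (del_edges ?N E)"
    using assms(2) neighbours_subset[OF assms(1)] unfolding k_connected_def by blast
  have "card (insert x ?N) \<le> k"
    using \<open>card ?N < k\<close> finite_neighbours[OF assms(1)] by (simp add: card_insert_if)
  then have "\<not> V \<subseteq> insert x ?N"
    using assms(2) finite_neighbours[OF assms(1)] card_mono unfolding k_connected_def
    by (metis finite_insert leD le_less_trans)
  then obtain w where w: "w \<in> V" "w \<notin> insert x ?N" by blast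
  have "(x, w) \<in> {(p, q). {p, q} \<in> del_edges ?N E}\<^sup>*"
    using connected w assms(3) self_notin_neighbours[OF assms(1)]
    unfolding connected_graph_def by blast
  then have "w = x"
  proof (induction rule: rtrancl_induct)
    case (step y z)
    \<comment> \<open>An edge at x ends in a neighbour of x, and these have all been deleted.\<close>
    then show ?case unfolding del_edges_def neighbours_def by auto
  qed simp
  then show False using w by simp
qed

definition graph_isomorphism ::
    "('a \<Rightarrow> 'b) \<Rightarrow> 'a set \<Rightarrow> 'a set set \<Rightarrow> 'b set \<Rightarrow> 'b set set \<Rightarrow> bool" where
  "graph_isomorphism f V E W F \<longleftrightarrow>
     bij_betw f V W \<and> (\<forall>u\<in>V. \<forall>w\<in>V. {u, w} \<in> E \<longleftrightarrow> {f u, f w} \<in> F)"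

lemma graph_iso_iff_graph_isomorphism: "graph_iso V E W F \<longleftrightarrow> (\<exists>f. graph_isomorphism f V E W F)"
  unfolding graph_iso_def graph_isomorphism_def ..

lemma graph_isomorphismD:
  assumes "graph_isomorphism f V E W F"
  shows "bij_betw f V W" "x \<in> V \<Longrightarrow> f x \<in> W"
    "x \<in> V \<Longrightarrow> y \<in> V \<Longrightarrow> f x = f y \<longleftrightarrow> x = y"
    "x \<in> V \<Longrightarrow> y \<in> V \<Longrightarrow> {x, y} \<in> E \<longleftrightarrow> {f x, f y} \<in> F"
  using assms unfolding graph_isomorphism_def bij_betw_def by (auto dest: inj_onD)

lemma graph_iso_card_edges:
  assumes "simple_graph V E" "simple_graph W F" "graph_iso V E W F"
  shows "card E = card F"
proof -
  obtain f where bij: "bij_betw f V W"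
    and adj: "\<forall>u\<in>V. \<forall>w\<in>V. {u, w} \<in> E \<longleftrightarrow> {f u, f w} \<in> F"
    using assms(3) unfolding graph_iso_def by blast
  have "inj_on ((`) f) E"
    using inj_on_image_Pow[of f V] bij simple_graph_edges_subset_Pow[OF assms(1)]
    by (meson bij_betw_imp_inj_on inj_on_subset)
  moreover have "(`) f ` E = F"
  proof
    show "(`) f ` E \<subseteq> F"
    proof
      fix e' assume "e' \<in> (`) f ` E"
      then obtain e where "e \<in> E" "e' = f ` e" by blast
      moreover from \<open>e \<in> E\<close> obtain x y where "e = {x, y}" "x \<in> V" "y \<in> V"
        using simple_graph_edgeE[OF assms(1)] by metis
      ultimately show "e' \<in> F"
        using adj by auto
    qed
    show "F \<subseteq> (`) f ` E"
    proof
      fix e assume "e \<in> F"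
      then obtain i j where ij: "e = {i, j}" "i \<in> W" "j \<in> W"
        using simple_graph_edgeE[OF assms(2)] by metis
      then obtain x y where xy: "x \<in> V" "y \<in> V" "i = f x" "j = f y"
        using bij unfolding bij_betw_def by blast
      then have "{x, y} \<in> E"
        using adj \<open>e \<in> F\<close> ij by simp
      moreover have "e = f ` {x, y}"
        using ij xy by simp
      ultimately show "e \<in> (`) f ` E"
        by blast
    qed
  qed
  ultimately show ?thesis
    by (metis card_image)
qed

lemma wheel_edge_iff:
  assumes "3 \<le> m"
  shows "{x, y} \<in> wheel_edges m \<longleftrightarrow> x \<noteq> y \<and> x < m \<and> y < m \<and>
     (x = 0 \<or> y = 0 \<or> y = x + 1 \<or> x = y + 1 \<or> {x, y} = {1, m - 1})"
  using assms unfolding wheel_edges_def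
  by (auto simp: doubleton_eq_iff)

lemma simple_graph_wheel:
  assumes "3 \<le> m"
  shows "simple_graph (wheel_vertices m) (wheel_edges m)"
  unfolding simple_graph_def wheel_vertices_def
proof (intro conjI ballI)
  fix e assume "e \<in> wheel_edges m"
  then consider i where "e = {0, i}" "1 \<le> i" "i < m" | i where "e = {i, i + 1}" "i + 1 < m"
    | "e = {1, m - 1}"
    unfolding wheel_edges_def by blast
  then show "\<exists>u v. e = {u, v} \<and> u \<noteq> v \<and> u \<in> {0..<m} \<and> v \<in> {0..<m}"
  proof cases
    case (1 i) then show ?thesis by (intro exI[of _ 0] exI[of _ i]) simp
  next
    case (2 i) then show ?thesis by (intro exI[of _ i] exI[of _ "i + 1"]) simp
  next
    case 3 then show ?thesis using assms by (intro exI[of _ 1] exI[of _ "m - 1"]) simp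
  qed
qed simp

lemma card_wheel_edges:
  assumes "4 \<le> m"
  shows "card (wheel_edges m) = 2 * m - 2"
proof -
  let ?spokes = "(\<lambda>i. {0, i}) ` {1..<m}"
  let ?path = "(\<lambda>i. {i, i + 1}) ` {1..<m - 1}"
  have "wheel_edges m = insert {1, m - 1} (?spokes \<union> ?path)"
    unfolding wheel_edges_def by (auto simp: image_iff; fastforce)
  moreover have "card ?spokes = m - 1" "card ?path = m - 2"
    by (subst card_image; auto simp: inj_on_def doubleton_eq_iff)+
  moreover have "?spokes \<inter> ?path = {}"
    by (auto simp: doubleton_eq_iff)
  moreover have "{1, m - 1} \<notin> ?spokes"
    using assms by (auto simp: doubleton_eq_iff)
  moreover have "{1, m - 1} \<notin> ?path"
  proof
    assume "{1, m - 1} \<in> ?path"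
    then obtain i where "{1, m - 1} = {i, i + 1}" by blast
    then have "(1 = i \<and> m - 1 = i + 1) \<or> (1 = i + 1 \<and> m - 1 = i)"
      by (simp only: doubleton_eq_iff)
    then show False
      using assms by linarith
  qed
  ultimately show ?thesis
    using assms by (simp add: card_Un_disjoint)
qed

lemma wheel_edges_4_iff: "{x, y} \<in> wheel_edges 4 \<longleftrightarrow> x \<noteq> y \<and> x < 4 \<and> y < 4"
  by (auto simp: wheel_edge_iff doubleton_eq_iff)

lemma wheel_triangle_hub:
  assumes "5 \<le> m" "{x, y} \<in> wheel_edges m" "{y, z} \<in> wheel_edges m" "{x, z} \<in> wheel_edges m"
  shows "x = 0 \<or> y = 0 \<or> z = 0"
  using assms by (auto simp: wheel_edge_iff doubleton_eq_iff)

lemma wheel_rim_other_neighbour: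
  assumes "4 \<le> m" "x \<noteq> 0" "y \<noteq> 0" "{x, y} \<in> wheel_edges m"
  obtains z where "z \<noteq> 0" "z \<noteq> x" "{y, z} \<in> wheel_edges m"
proof -
  define succ where "succ = (if y = m - 1 then 1 else y + 1)"
  define pred where "pred = (if y = 1 then m - 1 else y - 1)"
  have "{y, succ} \<in> wheel_edges m" "{y, pred} \<in> wheel_edges m" "succ \<noteq> pred"
    "succ \<noteq> 0" "pred \<noteq> 0"
    using assms unfolding succ_def pred_def by (auto simp: wheel_edge_iff doubleton_eq_iff)
  then show ?thesis
    using that by metis
qed

text \<open>Relabelling i \<mapsto> (if i \<le> k then i else i + 1) embeds W_m into W_{m+1} so that the new rim
  vertex k + 1 subdivides the rim edge {k, k + 1}; for the closing rim edge {1, m - 1} the new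
  vertex is m.\<close>
lemma wheel_subdivide_rim_edge:
  assumes "1 \<le> k" "k + 2 \<le> m" "4 \<le> m" "i < m" "j < m"
  shows "{if i \<le> k then i else i + 1, if j \<le> k then j else j + 1} \<in> wheel_edges (m + 1)
     \<longleftrightarrow> {i, j} \<in> wheel_edges m \<and> {i, j} \<noteq> {k, k + 1}"
  using assms by (auto simp: wheel_edge_iff doubleton_eq_iff split: if_splits)

lemma wheel_subdivide_rim_edge_new:
  assumes "1 \<le> k" "k + 2 \<le> m" "4 \<le> m" "j < m"
  shows "{k + 1, if j \<le> k then j else j + 1} \<in> wheel_edges (m + 1)
     \<longleftrightarrow> j = 0 \<or> j = k \<or> j = k + 1"
  using assms by (auto simp: wheel_edge_iff doubleton_eq_iff split: if_splits)

lemma wheel_subdivide_closing_edge: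
  assumes "4 \<le> m" "i < m" "j < m"
  shows "{i, j} \<in> wheel_edges (m + 1) \<longleftrightarrow> {i, j} \<in> wheel_edges m \<and> {i, j} \<noteq> {1, m - 1}"
  using assms by (auto simp: wheel_edge_iff doubleton_eq_iff)

lemma wheel_subdivide_closing_edge_new:
  assumes "4 \<le> m" "j < m"
  shows "{m, j} \<in> wheel_edges (m + 1) \<longleftrightarrow> j = 0 \<or> j = 1 \<or> j = m - 1"
  using assms by (auto simp: wheel_edge_iff doubleton_eq_iff)

lemma degree_three_neighbours_path:
  assumes "simple_graph V E" "every_edge_in_triangle E" "card (neighbours E v) = 3"
  obtains a b c where "neighbours E v = {a, b, c}" "a \<noteq> b" "b \<noteq> c" "a \<noteq> c"
    "{a, b} \<in> E" "{b, c} \<in> E"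
proof -
  obtain p q r where pqr: "neighbours E v = {p, q, r}" "p \<noteq> q" "q \<noteq> r" "p \<noteq> r"
    using assms(3) card_3_iff by metis
  \<comment> \<open>The triangle on the edge from v to a neighbour y puts a second neighbour of v next to y.\<close>
  have partner: "\<exists>w \<in> {p, q, r}. w \<noteq> y \<and> {y, w} \<in> E" if "y \<in> {p, q, r}" for y
  proof -
    have "{v, y} \<in> E"
      using that pqr(1) unfolding neighbours_def by blast
    then obtain w where w: "{v, w} \<in> E" "{y, w} \<in> E"
      using every_edge_in_triangleE[OF assms(2)] by metis
    have "w \<in> {p, q, r}"
      using w(1) pqr(1) unfolding neighbours_def by blast
    moreover have "w \<noteq> y"
      using simple_graph_edgeD(1)[OF assms(1) w(2)] by simp
    ultimately show ?thesis
      using w(2) by blast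
  qed
  have "{p, q} \<in> E \<or> {p, r} \<in> E" "{p, q} \<in> E \<or> {q, r} \<in> E" "{p, r} \<in> E \<or> {q, r} \<in> E"
    using partner[of p] partner[of q] partner[of r] by (auto simp: insert_commute)
  then consider "{p, q} \<in> E" "{q, r} \<in> E" | "{p, q} \<in> E" "{p, r} \<in> E" | "{p, r} \<in> E" "{q, r} \<in> E"
    by blast
  then show thesis
  proof cases
    case 1 then show ?thesis using that pqr by blast
  next
    case 2 then show ?thesis using that[of q p r] pqr by (auto simp: insert_commute)
  next
    case 3 then show ?thesis using that[of p r q] pqr by (auto simp: insert_commute)
  qed
qed

locale degree_three_reduction =
  fixes V :: "'a set" and E :: "'a set set" and v a b c :: 'a
  assumes simple: "simple_graph V E" and triangles: "every_edge_in_triangle E"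
    and v_in_V: "v \<in> V" and neighbours_v: "neighbours E v = {a, b, c}"
    and distinct: "a \<noteq> b" "b \<noteq> c" "a \<noteq> c"
    and path: "{a, b} \<in> E" "{b, c} \<in> E"
begin

definition V' :: "'a set" where
  "V' = V - {v}"

definition E' :: "'a set set" where
  "E' = insert {a, c} (del_edges {v} E)"

lemma neighbours_in_V': "a \<in> V'" "b \<in> V'" "c \<in> V'"
  using neighbours_subset[OF simple, of v] self_notin_neighbours[OF simple, of v] neighbours_v
  unfolding V'_def by auto

lemma edge_v_iff: "{v, y} \<in> E \<longleftrightarrow> y \<in> {a, b, c}"
  using neighbours_v unfolding neighbours_def by blast

lemma E'_iff: "{x, y} \<in> E' \<longleftrightarrow> {x, y} = {a, c} \<or> ({x, y} \<in> E \<and> x \<noteq> v \<and> y \<noteq> v)"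
  unfolding E'_def del_edges_def by auto

lemma edge_iff_E':
  assumes "x \<noteq> v" "y \<noteq> v" "{a, c} \<notin> E"
  shows "{x, y} \<in> E \<longleftrightarrow> {x, y} \<in> E' \<and> {x, y} \<noteq> {a, c}"
  using assms unfolding E'_iff by auto

lemma triangle_in_E':
  assumes "p \<in> {a, b, c}" "q \<in> {a, b, c}" "p \<noteq> q"
  shows "{p, q} \<in> E'"
  using assms path neighbours_in_V' unfolding E'_iff V'_def by (auto simp: insert_commute)

lemma simple_graph_E': "simple_graph V' E'"
  unfolding simple_graph_def
proof (intro conjI ballI)
  show "finite V'"
    unfolding V'_def using simple_graph_finite[OF simple] by simp
  fix e assume "e \<in> E'"
  then consider "e = {a, c}" | "e \<in> E" "v \<notin> e"
    unfolding E'_def del_edges_def by blast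
  then show "\<exists>x y. e = {x, y} \<and> x \<noteq> y \<and> x \<in> V' \<and> y \<in> V'"
  proof cases
    case 1 then show ?thesis using distinct neighbours_in_V' by blast
  next
    case 2 then show ?thesis
      using simple_graph_edgeE[OF simple] unfolding V'_def by (metis Diff_iff insertCI singletonD)
  qed
qed

lemma every_edge_in_triangle_E': "every_edge_in_triangle E'"
  unfolding every_edge_in_triangle_def
proof
  fix e assume "e \<in> E'"
  then consider "e = {a, c}" | "e \<in> E" "v \<notin> e"
    unfolding E'_def del_edges_def by blast
  then show "\<exists>x y w. e = {x, y} \<and> {y, w} \<in> E' \<and> {x, w} \<in> E'"
  proof cases
    case 1 then show ?thesis
      using triangle_in_E' distinct by blast
  next
    case 2
    then obtain x y where xy: "e = {x, y}" "x \<noteq> v" "y \<noteq> v"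
      using simple_graph_edgeE[OF simple] by (metis insertCI)
    then obtain w where w: "{x, w} \<in> E" "{y, w} \<in> E"
      using every_edge_in_triangleE[OF triangles] 2 by metis
    show ?thesis
    proof (cases "w = v")
      case False
      then have "{x, w} \<in> E'" "{y, w} \<in> E'"
        using w xy unfolding E'_iff by auto
      then show ?thesis using xy by blast
    next
      case True
      \<comment> \<open>Then x and y lie in the triangle a b c of the reduced graph, whose third vertex serves.\<close>
      then have "{v, x} \<in> E" "{v, y} \<in> E"
        using w by (simp_all add: insert_commute)
      then have "x \<in> {a, b, c}" "y \<in> {a, b, c}"
        using edge_v_iff by blast+
      moreover have "x \<noteq> y"
        using simple_graph_edgeD(1)[OF simple] 2 xy by blast
      ultimately obtain r where "r \<in> {a, b, c}" "r \<noteq> x" "r \<noteq> y"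
        using distinct by auto
      then have "{x, r} \<in> E'" "{y, r} \<in> E'"
        using triangle_in_E' \<open>x \<in> {a, b, c}\<close> \<open>y \<in> {a, b, c}\<close> by auto
      then show ?thesis
        using xy by blast
    qed
  qed
qed

lemma card_E_eq_card_E': "card E = card E' + 2 + (if {a, c} \<in> E then 1 else 0)"
proof -
  let ?D = "del_edges {v} E"
  let ?S = "{{v, a}, {v, b}, {v, c}}"
  have "E = ?D \<union> ?S"
  proof -
    have "v \<notin> e" if e: "e \<in> E" "e \<notin> ?S" for e
    proof
      assume "v \<in> e"
      obtain x y where "e = {x, y}"
        using simple_graph_edgeE[OF simple e(1)] by metis
      with \<open>v \<in> e\<close> obtain z where "e = {v, z}"
        by (auto simp: insert_commute)
      then show False
        using e edge_v_iff by auto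
    qed
    then show ?thesis
      using edge_v_iff unfolding del_edges_def by auto
  qed
  moreover have "?D \<inter> ?S = {}"
    unfolding del_edges_def by auto
  moreover have finite: "finite ?D"
    using simple_graph_finite_edges[OF simple] unfolding del_edges_def by simp
  ultimately have "card E = card ?D + card ?S"
    by (metis card_Un_disjoint finite.emptyI finite.insertI)
  moreover have "card ?S = 3"
    using distinct by (simp add: doubleton_eq_iff)
  moreover have "{a, c} \<in> ?D \<longleftrightarrow> {a, c} \<in> E"
    using neighbours_in_V' unfolding del_edges_def V'_def by auto
  then have "card E' = card ?D + (if {a, c} \<in> E then 0 else 1)"
    unfolding E'_def using finite by (simp add: card_insert_if)
  ultimately show ?thesis
    by simp
qed

text \<open>A walk in G - X is rerouted through G' - X by replacing each visit p v q by the edge pq of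
  the triangle a b c; while the walk sits at v, every surviving vertex of a, b, c is reachable.\<close>
lemma rerouted_walk:
  assumes "(u, y) \<in> {(p, q). {p, q} \<in> del_edges X E}\<^sup>*" "u \<noteq> v"
  shows "if y = v then \<forall>z \<in> {a, b, c} - X. (u, z) \<in> {(p, q). {p, q} \<in> del_edges X E'}\<^sup>*
         else (u, y) \<in> {(p, q). {p, q} \<in> del_edges X E'}\<^sup>*"
  using assms(1)
proof (induction rule: rtrancl_induct)
  case base
  then show ?case using assms(2) by simp
next
  case (step y z)
  let ?R' = "{(p, q). {p, q} \<in> del_edges X E'}"
  have yz: "{y, z} \<in> E" "y \<notin> X" "z \<notin> X" "y \<noteq> z"
    using step(2) simple_graph_edgeD(1)[OF simple] unfolding del_edges_def by auto
  have triangle: "(p, q) \<in> ?R'" if "p \<in> {a, b, c} - X" "q \<in> {a, b, c} - X" "p \<noteq> q" for p q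
    using triangle_in_E'[of p q] that unfolding del_edges_def by auto
  show ?case
  proof (cases "y = v")
    case True
    then have "z \<in> {a, b, c}"
      using yz(1) edge_v_iff by simp
    then show ?thesis using step(3) True yz by auto
  next
    case False
    then have uy: "(u, y) \<in> ?R'\<^sup>*"
      using step(3) by simp
    show ?thesis
    proof (cases "z = v")
      case True
      then have "y \<in> {a, b, c} - X"
        using yz edge_v_iff by (simp add: insert_commute)
      then have "(u, z') \<in> ?R'\<^sup>*" if "z' \<in> {a, b, c} - X" for z'
        using uy triangle[of y z'] that by (cases "z' = y") (auto intro: rtrancl_into_rtrancl)
      then show ?thesis
        using True by simp
    next
      case False
      then have "(y, z) \<in> ?R'"
        using yz \<open>y \<noteq> v\<close> E'_iff[of y z] unfolding del_edges_def by auto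
      then show ?thesis
        using uy False by (simp add: rtrancl_into_rtrancl)
    qed
  qed
qed

lemma k_connected_E':
  assumes "k_connected 3 V E" "5 \<le> card V"
  shows "k_connected 3 V' E'"
  unfolding k_connected_def
proof (intro conjI allI impI)
  have card_V': "card V' = card V - 1"
    unfolding V'_def using v_in_V simple_graph_finite[OF simple] by simp
  then show "3 < card V'"
    using assms(2) by simp
  fix X assume X: "X \<subseteq> V' \<and> card X < 3"
  then have "connected_graph (V - X) (del_edges X E)"
    using assms(1) unfolding k_connected_def V'_def by blast
  then have "(u, w) \<in> {(p, q). {p, q} \<in> del_edges X E'}\<^sup>*" if "u \<in> V' - X" "w \<in> V' - X" for u w
    using rerouted_walk[of u w X] that unfolding connected_graph_def V'_def by auto
  moreover have "V' - X \<noteq> {}"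
  proof
    assume "V' - X = {}"
    then have "card V' \<le> card X"
      using X simple_graph_finite[OF simple] card_mono unfolding V'_def
      by (metis Diff_eq_empty_iff finite_Diff finite_subset)
    then show False
      using X card_V' assms(2) by linarith
  qed
  ultimately show "connected_graph (V' - X) (del_edges X E')"
    unfolding connected_graph_def by blast
qed

lemma wheel_hub_not_in_ac:
  assumes "{a, c} \<notin> E" "5 \<le> m" "graph_isomorphism g V' E' {0..<m} (wheel_edges m)"
    and "{p, q} = {a, c}"
  shows "g p \<noteq> 0"
proof
  assume gp: "g p = 0"
  note bij = graph_isomorphismD(1)[OF assms(3)]
    and g_eq_iff = graph_isomorphismD(3)[OF assms(3)]
    and adj = graph_isomorphismD(4)[OF assms(3)]
  have pq: "p \<in> V'" "q \<in> V'" "p \<noteq> q" "b \<noteq> p" "b \<noteq> q" "q \<in> {a, b, c}"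
    using assms(4) neighbours_in_V' distinct by (auto simp: doubleton_eq_iff)
  have "g b \<noteq> 0" "g q \<noteq> 0"
    using g_eq_iff[of b p] g_eq_iff[of q p] gp pq neighbours_in_V' by auto
  moreover have "{g b, g q} \<in> wheel_edges m"
    using adj triangle_in_E'[of b q] pq neighbours_in_V' by auto
  ultimately obtain z where z: "z \<noteq> 0" "z \<noteq> g b" "{g q, z} \<in> wheel_edges m"
    using wheel_rim_other_neighbour[of m "g b" "g q"] assms(2) by auto
  then have "z < m" "z \<noteq> g q"
    using wheel_edge_iff[of m "g q" z] assms(2) by auto
  then obtain q' where q': "q' \<in> V'" "g q' = z"
    using bij unfolding bij_betw_def by (metis atLeastLessThan_iff imageE zero_le)
  then have "q' \<noteq> p" "q' \<noteq> q" "q' \<noteq> b" "q' \<noteq> v"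
    using gp z \<open>z \<noteq> g q\<close> unfolding V'_def by auto
  then have "{q, q'} \<in> E"
    using adj[of q q'] z(3) q' pq assms(4) E'_iff[of q q'] by (auto simp: doubleton_eq_iff)
  \<comment> \<open>A triangle on the rim edge {q, q'} would need a common rim neighbour, which does not exist.\<close>
  then obtain w where w: "{q, w} \<in> E" "{q', w} \<in> E"
    using every_edge_in_triangleE[OF triangles] by metis
  have "w \<noteq> v"
    using w(2) edge_v_iff \<open>q' \<noteq> p\<close> \<open>q' \<noteq> q\<close> \<open>q' \<noteq> b\<close> assms(4)
    by (auto simp: insert_commute)
  moreover have "w \<noteq> p"
    using w(1) assms(1,4) by (auto simp: insert_commute)
  moreover have "q \<noteq> v"
    using pq unfolding V'_def by auto
  ultimately have "w \<in> V'" "{q, w} \<in> E'" "{q', w} \<in> E'"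
    using w simple_graph_edgeD(3)[OF simple w(1)] \<open>q' \<noteq> v\<close> E'_iff unfolding V'_def by auto
  then have gw: "{z, g w} \<in> wheel_edges m" "{g q, g w} \<in> wheel_edges m" "g w \<noteq> 0"
    using adj pq q' gp g_eq_iff[of w p] \<open>w \<noteq> p\<close> by auto
  show False
    using wheel_triangle_hub[OF assms(2) z(3) gw(1,2)] gw(3) z(1) \<open>g q \<noteq> 0\<close> by simp
qed

lemma wheel_isomorphism_hub_b:
  assumes "{a, c} \<notin> E" "4 \<le> m" "graph_isomorphism g V' E' {0..<m} (wheel_edges m)"
  obtains h where "graph_isomorphism h V' E' {0..<m} (wheel_edges m)" "h b = 0"
proof (cases "m = 4")
  case True
  \<comment> \<open>W_4 is complete, so any relabelling of its vertices is an automorphism.\<close>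
  let ?\<tau> = "Transposition.transpose 0 (g b)"
  have "g b < 4"
    using assms(3) neighbours_in_V' True unfolding graph_isomorphism_def bij_betw_def by auto
  then have "bij_betw ?\<tau> {0..<m} {0..<m}" "?\<tau> i < 4 \<longleftrightarrow> i < 4" for i
    using True by (auto simp: transpose_def)
  moreover have "?\<tau> i = ?\<tau> j \<longleftrightarrow> i = j" for i j
    by (simp add: inj_eq)
  ultimately have "graph_isomorphism (?\<tau> \<circ> g) V' E' {0..<m} (wheel_edges m)"
    using assms(3) True bij_betw_trans unfolding graph_isomorphism_def
    by (simp add: wheel_edges_4_iff) blast
  then show thesis
    using that by simp
next
  case False
  have "{g a, g b} \<in> wheel_edges m" "{g b, g c} \<in> wheel_edges m" "{g a, g c} \<in> wheel_edges m"
    using assms(3) neighbours_in_V' triangle_in_E' distinct unfolding graph_isomorphism_def by auto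
  then have "g a = 0 \<or> g b = 0 \<or> g c = 0"
    using wheel_triangle_hub[of m] assms(2) False by simp
  then have "g b = 0"
    using wheel_hub_not_in_ac[OF assms(1) _ assms(3), of a c] wheel_hub_not_in_ac[OF assms(1) _ assms(3), of c a]
      assms(2) False by (auto simp: insert_commute)
  then show thesis
    using that assms(3) by blast
qed

lemma graph_isomorphism_insert_v:
  assumes "{a, c} \<notin> E" "4 \<le> m"
    and g: "graph_isomorphism g V' E' {0..<m} (wheel_edges m)" "g b = 0"
    and s: "bij_betw s {0..<m} ({0..<m + 1} - {l})" "l < m + 1"
    and old_edges: "\<And>i j. i < m \<Longrightarrow> j < m \<Longrightarrow>
      {s i, s j} \<in> wheel_edges (m + 1) \<longleftrightarrow> {i, j} \<in> wheel_edges m \<and> {i, j} \<noteq> {g a, g c}"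
    and new_edges: "\<And>j. j < m \<Longrightarrow> {l, s j} \<in> wheel_edges (m + 1) \<longleftrightarrow> j = 0 \<or> j = g a \<or> j = g c"
  shows "graph_isomorphism ((s \<circ> g)(v := l)) V E {0..<m + 1} (wheel_edges (m + 1))"
proof -
  let ?f = "(s \<circ> g)(v := l)"
  note bij_g = graph_isomorphismD(1)[OF g(1)]
    and g_eq_iff = graph_isomorphismD(3)[OF g(1)]
    and adj = graph_isomorphismD(4)[OF g(1)]
  have g_less: "g x < m" if "x \<in> V'" for x
    using graph_isomorphismD(2)[OF g(1) that] by simp
  have "bij_betw ?f V' ({0..<m + 1} - {l})"
    using bij_betw_trans[OF bij_g s(1)] by (rule bij_betw_cong[THEN iffD1, rotated]) (simp add: V'_def)
  then have "bij_betw ?f (V' \<union> {v}) (({0..<m + 1} - {l}) \<union> {l})"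
    by (rule bij_betw_combine) auto
  moreover have "V' \<union> {v} = V" "({0..<m + 1} - {l}) \<union> {l} = {0..<m + 1}"
    using v_in_V s(2) unfolding V'_def by auto
  ultimately have bij: "bij_betw ?f V {0..<m + 1}"
    by simp
  have edge_at_v: "{v, y} \<in> E \<longleftrightarrow> {?f v, ?f y} \<in> wheel_edges (m + 1)" if "y \<in> V" for y
  proof (cases "y = v")
    case True
    then show ?thesis
      using simple_graph_edgeD(1)[OF simple, of v v] wheel_edge_iff[of "m + 1" l l] assms(2) by auto
  next
    case False
    then have "y \<in> V'"
      using that unfolding V'_def by simp
    have "{v, y} \<in> E \<longleftrightarrow> y = b \<or> y = a \<or> y = c"
      using edge_v_iff by auto
    also have "\<dots> \<longleftrightarrow> g y = 0 \<or> g y = g a \<or> g y = g c"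
      using g(2) g_eq_iff \<open>y \<in> V'\<close> neighbours_in_V' by metis
    also have "\<dots> \<longleftrightarrow> {?f v, ?f y} \<in> wheel_edges (m + 1)"
      using new_edges[OF g_less[OF \<open>y \<in> V'\<close>]] False by simp
    finally show ?thesis .
  qed
  have edge_off_v: "{u, w} \<in> E \<longleftrightarrow> {?f u, ?f w} \<in> wheel_edges (m + 1)"
    if "u \<in> V'" "w \<in> V'" for u w
  proof -
    have "{u, w} = {a, c} \<longleftrightarrow> {g u, g w} = {g a, g c}"
      using that neighbours_in_V' g_eq_iff by (auto simp: doubleton_eq_iff)
    then have "{u, w} \<in> E \<longleftrightarrow> {g u, g w} \<in> wheel_edges m \<and> {g u, g w} \<noteq> {g a, g c}"
      using edge_iff_E'[of u w] assms(1) that adj unfolding V'_def by auto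
    also have "\<dots> \<longleftrightarrow> {?f u, ?f w} \<in> wheel_edges (m + 1)"
      using old_edges[OF g_less g_less] that unfolding V'_def by auto
    finally show ?thesis .
  qed
  show ?thesis
    unfolding graph_isomorphism_def
  proof (intro conjI bij ballI)
    fix u w assume "u \<in> V" "w \<in> V"
    then consider "u = v" | "w = v" | "u \<in> V'" "w \<in> V'"
      unfolding V'_def by blast
    then show "{u, w} \<in> E \<longleftrightarrow> {?f u, ?f w} \<in> wheel_edges (m + 1)"
    proof cases
      case 1
      then show ?thesis using edge_at_v[OF \<open>w \<in> V\<close>] by simp
    next
      case 2
      then show ?thesis using edge_at_v[OF \<open>u \<in> V\<close>] by (metis insert_commute)
    next
      case 3
      then show ?thesis using edge_off_v by simp
    qed
  qed
qed

lemma graph_iso_wheel_insert_v: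
  assumes "{a, c} \<notin> E" "4 \<le> m" "graph_iso V' E' (wheel_vertices m) (wheel_edges m)"
  shows "graph_iso V E (wheel_vertices (m + 1)) (wheel_edges (m + 1))"
proof -
  obtain g where g: "graph_isomorphism g V' E' {0..<m} (wheel_edges m)" "g b = 0"
    using wheel_isomorphism_hub_b assms
    unfolding graph_iso_iff_graph_isomorphism wheel_vertices_def by metis
  have "g a \<noteq> 0" "g c \<noteq> 0" "{g a, g c} \<in> wheel_edges m"
    using graph_isomorphismD[OF g(1)] g(2) neighbours_in_V' triangle_in_E'[of a c] distinct
    by (metis, metis, simp)
  then have rim: "g a < m" "g c < m" "g c = g a + 1 \<or> g a = g c + 1 \<or> {g a, g c} = {1, m - 1}"
    using wheel_edge_iff[of m "g a" "g c"] assms(2) by auto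
  \<comment> \<open>So g a and g c are consecutive on the rim, and v is inserted between them.\<close>
  consider k where "1 \<le> k" "k + 2 \<le> m" "{g a, g c} = {k, k + 1}" | "{g a, g c} = {1, m - 1}"
  proof -
    consider "g c = g a + 1" | "g a = g c + 1" | "{g a, g c} = {1, m - 1}"
      using rim(3) by blast
    then show thesis
    proof cases
      case 1
      then show ?thesis using that(1)[of "g a"] \<open>g a \<noteq> 0\<close> rim(2) by simp
    next
      case 2
      then show ?thesis using that(1)[of "g c"] \<open>g c \<noteq> 0\<close> rim(1) by (simp add: insert_commute)
    next
      case 3
      then show ?thesis using that(2) by simp
    qed
  qed
  then obtain s l where s: "bij_betw s {0..<m} ({0..<m + 1} - {l})" "l < m + 1"
    and old_edges: "\<And>i j. i < m \<Longrightarrow> j < m \<Longrightarrow>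
      {s i, s j} \<in> wheel_edges (m + 1) \<longleftrightarrow> {i, j} \<in> wheel_edges m \<and> {i, j} \<noteq> {g a, g c}"
    and new_edges: "\<And>j. j < m \<Longrightarrow> {l, s j} \<in> wheel_edges (m + 1) \<longleftrightarrow> j = 0 \<or> j = g a \<or> j = g c"
  proof cases
    case (1 k)
    let ?s = "\<lambda>i. if i \<le> k then i else i + 1"
    have "bij_betw ?s {0..<m} ({0..<m + 1} - {k + 1})"
      using 1(2) by (intro bij_betw_byWitness[where f' = "\<lambda>j. if j \<le> k then j else j - 1"]) auto
    moreover have "j = g a \<or> j = g c \<longleftrightarrow> j = k \<or> j = k + 1" for j
      using 1(3) by (auto simp: doubleton_eq_iff)
    ultimately show thesis
      using 1 wheel_subdivide_rim_edge[OF 1(1,2) assms(2)] wheel_subdivide_rim_edge_new[OF 1(1,2) assms(2)]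
      by (intro that[of ?s "k + 1"]) auto
  next
    case 2
    have "bij_betw id {0..<m} ({0..<m + 1} - {m})"
      by (auto simp: bij_betw_def)
    moreover have "j = g a \<or> j = g c \<longleftrightarrow> j = 1 \<or> j = m - 1" for j
      using 2 by (auto simp: doubleton_eq_iff)
    ultimately show thesis
      using 2 wheel_subdivide_closing_edge[OF assms(2)] wheel_subdivide_closing_edge_new[OF assms(2)]
      by (intro that[of id m]) auto
  qed
  then have "graph_isomorphism ((s \<circ> g)(v := l)) V E {0..<m + 1} (wheel_edges (m + 1))"
    using graph_isomorphism_insert_v[OF assms(1,2) g s old_edges new_edges] by blast
  then show ?thesis
    unfolding graph_iso_iff_graph_isomorphism wheel_vertices_def by blast
qed

end

lemma min_degree_card_edges:
  assumes "simple_graph V E" "\<And>x. x \<in> V \<Longrightarrow> d \<le> card (neighbours E x)"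
  shows "d * card V \<le> 2 * card E"
proof -
  have "d * card V = (\<Sum>x\<in>V. d)"
    by simp
  also have "\<dots> \<le> (\<Sum>x\<in>V. card (neighbours E x))"
    using assms(2) by (rule sum_mono)
  finally show ?thesis
    using sum_card_neighbours[OF assms(1)] by simp
qed

lemma graph_iso_wheel_4:
  assumes "simple_graph V E" "card V = 4" "\<And>x. x \<in> V \<Longrightarrow> 3 \<le> card (neighbours E x)"
  shows "graph_iso V E (wheel_vertices 4) (wheel_edges 4)"
proof -
  have complete: "{u, w} \<in> E \<longleftrightarrow> u \<noteq> w" if "u \<in> V" "w \<in> V" for u w
  proof -
    have "neighbours E u \<subseteq> V - {u}" "card (V - {u}) = 3"
      using neighbours_subset[OF assms(1)] self_notin_neighbours[OF assms(1)] assms(2) that by auto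
    then have "neighbours E u = V - {u}"
      using assms(3)[OF that(1)] simple_graph_finite[OF assms(1)]
      by (metis card_seteq finite_Diff)
    then show ?thesis
      using that unfolding neighbours_def by blast
  qed
  obtain f :: "'a \<Rightarrow> nat" where f: "bij_betw f V {0..<4}"
    using ex_bij_betw_finite_nat[OF simple_graph_finite[OF assms(1)]] assms(2) by metis
  then have "graph_isomorphism f V E {0..<4} (wheel_edges 4)"
    unfolding graph_isomorphism_def bij_betw_def
    by (auto simp: complete wheel_edges_4_iff inj_on_eq_iff)
  then show ?thesis
    unfolding graph_iso_iff_graph_isomorphism wheel_vertices_def by blast
qed

lemma triangle_covered_3_connected_card_edges:
  assumes "simple_graph V E" "k_connected 3 V E" "every_edge_in_triangle E"
  shows "2 * card V - 2 \<le> card E \<and>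
    (card E = 2 * card V - 2 \<longrightarrow> graph_iso V E (wheel_vertices (card V)) (wheel_edges (card V)))"
  using assms
proof (induction "card V" arbitrary: V E rule: less_induct)
  case less
  have min_degree: "3 \<le> card (neighbours E x)" if "x \<in> V" for x
    using k_connected_min_degree[OF less.prems(1,2) that] .
  have "4 \<le> card V"
    using less.prems(2) unfolding k_connected_def by simp
  show ?case
  proof (cases "\<exists>v\<in>V. card (neighbours E v) = 3")
    case False
    then have "4 \<le> card (neighbours E x)" if "x \<in> V" for x
      using min_degree[OF that] that by fastforce
    then have "4 * card V \<le> 2 * card E"
      by (rule min_degree_card_edges[OF less.prems(1)])
    then show ?thesis
      using \<open>4 \<le> card V\<close> by linarith
  next
    case True
    then obtain v where v: "v \<in> V" "card (neighbours E v) = 3"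
      by blast
    show ?thesis
    proof (cases "card V = 4")
      case True
      then have "graph_iso V E (wheel_vertices (card V)) (wheel_edges (card V))"
        using graph_iso_wheel_4[OF less.prems(1) _ min_degree] by simp
      moreover have "card E = 2 * card V - 2"
        using graph_iso_card_edges[OF less.prems(1) simple_graph_wheel calculation]
          card_wheel_edges True by simp
      ultimately show ?thesis
        by simp
    next
      case False
      obtain a b c where "neighbours E v = {a, b, c}" "a \<noteq> b" "b \<noteq> c" "a \<noteq> c"
        "{a, b} \<in> E" "{b, c} \<in> E"
        using degree_three_neighbours_path[OF less.prems(1,3) v(2)] by blast
      then interpret degree_three_reduction V E v a b c
        using less.prems v by unfold_locales auto
      have "card V' = card V - 1"
        unfolding V'_def using v(1) simple_graph_finite[OF simple] by simp
      then have IH: "2 * (card V - 1) - 2 \<le> card E' \<and> (card E' = 2 * (card V - 1) - 2 \<longrightarrow>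
          graph_iso V' E' (wheel_vertices (card V - 1)) (wheel_edges (card V - 1)))"
        using less.hyps[of V' E'] simple_graph_E' every_edge_in_triangle_E'
          k_connected_E'[OF less.prems(2)] False \<open>4 \<le> card V\<close> by simp
      \<comment> \<open>Equality forces ac to be a new edge and G' to be a wheel.\<close>
      have "graph_iso V E (wheel_vertices (card V)) (wheel_edges (card V))"
        if "card E = 2 * card V - 2"
        using that graph_iso_wheel_insert_v[of "card V - 1"] IH card_E_eq_card_E' False \<open>4 \<le> card V\<close>
        by (auto split: if_splits)
      then show ?thesis
        using IH card_E_eq_card_E' False \<open>4 \<le> card V\<close> by auto
    qed
  qed
qed

theorem lemma2:
  fixes V :: "'a set" and E :: "'a set set" and n :: nat
  assumes "simple_graph V E"
    and "k_connected 3 V E"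
    and "every_edge_in_triangle E"
    and "n = card V"
  shows "card E \<ge> 2 * n - 2 \<and>
         (card E = 2 * n - 2 \<longleftrightarrow> graph_iso V E (wheel_vertices n) (wheel_edges n))"
proof -
  have "4 \<le> n"
    using assms(2,4) unfolding k_connected_def by simp
  then have "graph_iso V E (wheel_vertices n) (wheel_edges n) \<Longrightarrow> card E = 2 * n - 2"
    using graph_iso_card_edges[OF assms(1) simple_graph_wheel[of n]] card_wheel_edges[of n] by simp
  then show ?thesis
    using triangle_covered_3_connected_card_edges[OF assms(1-3)] assms(4) by blast
qed

end
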